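(* Consider the two-period setting of the context. (i) Assume that for all $n\in\mathcal N$, $\frac{\hat\ell_n^P}{E_n}+\frac12\ge\frac{\hat\ell^P}{E}$. Then for every $\alpha\in(0,1]$ the unique Nash equilibrium of $\mathcal G^{\mathrm{DP}}_\alpha$ is given by $$\ell_n^P=\hat\ell_n^P+\frac{E_n}{E}\frac{1-\alpha}{2}(\hat\ell^O-\hat\ell^P),\qquad \ell_n^O=\hat\ell_n^O+\frac{E_n}{E}\frac{1-\alpha}{2}(\hat\ell^P-\hat\ell^O),$$ and for $\alpha=0$ every feasible profile whose aggregate peak load satisfies $\ell^P=\frac E2$ is a Nash equilibrium of $\mathcal G^{\mathrm{DP}}_0$. (ii) Assume that for all $n\in\mathcal N$, $2(N-1)\hat\ell_n^P\ge(\hat\ell^P-\hat\ell^O)-E_n$. Then for every $\alpha\in[0,1]$ the unique Nash equilibrium of $\mathcal G^{\mathrm{HP}}_\alpha$ is given by $$\ell_n^P=\hat\ell_n^P+\frac{1-\alpha}{2(1+\alpha)}\Big(\phi(\alpha)(\hat\ell^O-\hat\ell^P)+(\hat\ell_n^O-\hat\ell_n^P)\Big),\qquad \ell_n^O=\hat\ell_n^O+\frac{1-\alpha}{2(1+\alpha)}\Big(\phi(\alpha)(\hat\ell^P-\hat\ell^O)+(\hat\ell_n^P-\hat\ell_n^O)\Big),$$ where $\phi(\alpha)=\frac{2\alpha}{(1+\alpha)+(1-\alpha)N}\in[0,1]$.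
   Context: Two-period setting: users $\mathcal N=\{1,\dots,N\}$, periods $\mathcal H=\{P,O\}$ (peak and off-peak). Each user $n$ has energy demand $E_n>0$ and preferred profile $(\hat\ell_n^P,\hat\ell_n^O)$ with $\hat\ell_n^h\ge0$ and $\hat\ell_n^P+\hat\ell_n^O=E_n$; write $E=\sum_nE_n$, $\hat\ell^h=\sum_n\hat\ell_n^h$, and assume $\hat\ell^P\ge\frac E2\ge\hat\ell^O$. User $n$'s feasible set is $\mathcal L_n=\{(\ell_n^P,\ell_n^O):\ell_n^P+\ell_n^O=E_n,\ \ell_n^P\ge0,\ \ell_n^O\ge0\}$; $\ell^h=\sum_n\ell_n^h$. Costs are $C_h(x)=x^2$ for $h\in\{P,O\}$, utilities $u_n(\boldsymbol\ell_n)=-\sum_{h}(\ell_n^h-\hat\ell_n^h)^2$. DP bill: $b_n^{\mathrm{DP}}=\frac{E_n}{E}\big((\ell^P)^2+(\ell^O)^2\big)$; HP bill: $b_n^{\mathrm{HP}}=\sum_h\frac{\ell_n^h}{\ell^h}(\ell^h)^2=\sum_h\ell_n^h\ell^h$. In $\mathcal G^{\mathrm{DP}}_\alpha$ (resp. $\mathcal G^{\mathrm{HP}}_\alpha$), $\alpha\in[0,1]$, user $n$ minimizes $f_n^\alpha=(1-\alpha)b_n-\alpha u_n(\boldsymbol\ell_n)$ over $\mathcal L_n$ with $b_n=b_n^{\mathrm{DP}}$ (resp. $b_n^{\mathrm{HP}}$), given the others' profiles. A Nash equilibrium is a profile in $\prod_n\mathcal L_n$ from which no user can lower $f_n^\alpha$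 by a unilateral feasible deviation. *)

theory Defs
  imports Complex_Main
begin

text \<open>Users are indexed by 0..<N. A load profile is a pair of functions
  lP lO :: nat => real (peak / off-peak loads); only values at indices < N matter.\<close>

definition feasible_user :: "(nat \<Rightarrow> real) \<Rightarrow> nat \<Rightarrow> real \<Rightarrow> real \<Rightarrow> bool" where
  "feasible_user E n x y \<longleftrightarrow> x + y = E n \<and> x \<ge> 0 \<and> y \<ge> 0"

definition feasible_profile ::
  "nat \<Rightarrow> (nat \<Rightarrow> real) \<Rightarrow> (nat \<Rightarrow> real) \<Rightarrow> (nat \<Rightarrow> real) \<Rightarrow> bool" where
  "feasible_profile N E lP lO \<longleftrightarrow> (\<forall>n<N. feasible_user E n (lP n) (lO n))"

definition total :: "nat \<Rightarrow> (nat \<Rightarrow> real) \<Rightarrow> real" where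
  "total N f = (\<Sum>n<N. f n)"

text \<open>DP bill: E_n/E * ((l^P)^2 + (l^O)^2), costs C_h(x) = x^2.\<close>
definition bill_DP ::
  "nat \<Rightarrow> (nat \<Rightarrow> real) \<Rightarrow> (nat \<Rightarrow> real) \<Rightarrow> (nat \<Rightarrow> real) \<Rightarrow> nat \<Rightarrow> real" where
  "bill_DP N E lP lO n = E n / total N E * ((total N lP)^2 + (total N lO)^2)"

definition bill_HP ::
  "nat \<Rightarrow> (nat \<Rightarrow> real) \<Rightarrow> (nat \<Rightarrow> real) \<Rightarrow> (nat \<Rightarrow> real) \<Rightarrow> nat \<Rightarrow> real" where
  "bill_HP N E lP lO n = lP n * total N lP + lO n * total N lO"

definition utility ::
  "(nat \<Rightarrow> real) \<Rightarrow> (nat \<Rightarrow> real) \<Rightarrow> (nat \<Rightarrow> real) \<Rightarrow> (nat \<Rightarrow> real) \<Rightarrow> nat \<Rightarrow> real" where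
  "utility hP hO lP lO n = - ((lP n - hP n)^2 + (lO n - hO n)^2)"

definition objective ::
  "(nat \<Rightarrow> (nat \<Rightarrow> real) \<Rightarrow> (nat \<Rightarrow> real) \<Rightarrow> (nat \<Rightarrow> real) \<Rightarrow> nat \<Rightarrow> real)
   \<Rightarrow> nat \<Rightarrow> (nat \<Rightarrow> real) \<Rightarrow> (nat \<Rightarrow> real) \<Rightarrow> (nat \<Rightarrow> real) \<Rightarrow> real
   \<Rightarrow> (nat \<Rightarrow> real) \<Rightarrow> (nat \<Rightarrow> real) \<Rightarrow> nat \<Rightarrow> real" where
  "objective bill N E hP hO \<alpha> lP lO n =
     (1 - \<alpha>) * bill N E lP lO n - \<alpha> * utility hP hO lP lO n"

definition is_NE ::
  "(nat \<Rightarrow> (nat \<Rightarrow> real) \<Rightarrow> (nat \<Rightarrow> real) \<Rightarrow> (nat \<Rightarrow> real) \<Rightarrow> nat \<Rightarrow> real)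
   \<Rightarrow> nat \<Rightarrow> (nat \<Rightarrow> real) \<Rightarrow> (nat \<Rightarrow> real) \<Rightarrow> (nat \<Rightarrow> real) \<Rightarrow> real
   \<Rightarrow> (nat \<Rightarrow> real) \<Rightarrow> (nat \<Rightarrow> real) \<Rightarrow> bool" where
  "is_NE bill N E hP hO \<alpha> lP lO \<longleftrightarrow>
     feasible_profile N E lP lO \<and>
     (\<forall>n<N. \<forall>x y. feasible_user E n x y \<longrightarrow>
        objective bill N E hP hO \<alpha> lP lO n
          \<le> objective bill N E hP hO \<alpha> (lP(n := x)) (lO(n := y)) n)"

definition phi :: "nat \<Rightarrow> real \<Rightarrow> real" where
  "phi N \<alpha> = 2 * \<alpha> / ((1 + \<alpha>) + (1 - \<alpha>) * real N)"

end

theory Submission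
  imports Defs
begin

text \<open>Along its feasible segment (off-peak load = demand minus peak load), user n's objective in
  either game is a convex quadratic in its peak load, whose slope (the marginal) is affine in the
  user's own peak load and in the aggregate peak load. Hence a feasible profile at which every
  marginal vanishes is an equilibrium; the stated profiles are exactly such zeros, and the
  hypotheses of (i) and (ii) are what keeps their loads nonnegative. Conversely, at any
  equilibrium each marginal satisfies the variational inequality on the segment. Comparing two
  equilibria, the difference of the marginals is a positive combination of the individual and the
  aggregate differences of peak loads, and the two inequalities then force the profiles to agree.
  In the DP game the individual coefficient is \<alpha>, so uniqueness is lost at \<alpha> = 0, where the
  marginal vanishes exactly when the aggregate peak load is E/2.\<close>

lemma total_fun_upd:
  assumes "n < N"
  shows "total N (f(n := x)) = total N f - f n + x"
proof -
  have "total N (f(n := x)) = (\<Sum>i<N. f i + (if i = n then x - f n else 0))"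
    unfolding total_def by (rule sum.cong) auto
  also have "\<dots> = total N f + (x - f n)"
    using assms by (simp add: sum.distrib total_def)
  finally show ?thesis by simp
qed

lemma total_eq_add:
  assumes "\<And>n. n < N \<Longrightarrow> f n + g n = h n"
  shows "total N h = total N f + total N g"
  unfolding total_def by (simp add: assms sum.distrib[symmetric])

lemma total_diff: "total N f - total N g = (\<Sum>n<N. f n - g n)"
  unfolding total_def by (simp add: sum_subtractf)

lemma feasible_profileD:
  assumes "feasible_profile N E lP lO" and "n < N"
  shows "lO n = E n - lP n" and "0 \<le> lP n" and "lP n \<le> E n"
  using assms by (auto simp: feasible_profile_def feasible_user_def)

lemma feasible_profile_total_offpeak:
  assumes "feasible_profile N E lP lO"
  shows "total N lO = total N E - total N lP"
  using total_eq_add[of N lP lO E] assms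
  by (auto simp: feasible_profile_def feasible_user_def)

lemma utility_deviation:
  assumes "feasible_profile N E lP lO" "n < N" "hP n + hO n = E n" "x + y = E n"
  shows "utility hP hO lP lO n - utility hP hO (lP(n := x)) (lO(n := y)) n
    = 4 * (x - lP n) * (lP n - hP n) + 2 * (x - lP n)\<^sup>2"
proof -
  have "y - hO n = - (x - hP n)" "lO n - hO n = - (lP n - hP n)"
    using assms feasible_profileD(1)[OF assms(1,2)] by (simp_all add: algebra_simps)
  then have squares: "(y - hO n)\<^sup>2 = (x - hP n)\<^sup>2" "(lO n - hO n)\<^sup>2 = (lP n - hP n)\<^sup>2"
    by (simp_all only: power2_minus)
  show ?thesis
    unfolding utility_def fun_upd_same squares by (simp add: power2_eq_square algebra_simps)
qed

lemma bill_DP_deviation: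
  assumes "feasible_profile N E lP lO" "n < N" "x + y = E n"
  shows "bill_DP N E (lP(n := x)) (lO(n := y)) n - bill_DP N E lP lO n
    = E n / total N E * (2 * (x - lP n) * (2 * total N lP - total N E) + 2 * (x - lP n)\<^sup>2)"
proof -
  have totals: "total N (lP(n := x)) = total N lP + (x - lP n)"
    "total N (lO(n := y)) = total N E - total N lP - (x - lP n)"
    "total N lO = total N E - total N lP"
    using assms feasible_profileD(1)[OF assms(1,2)]
    by (simp_all add: total_fun_upd feasible_profile_total_offpeak)
  show ?thesis
    unfolding bill_DP_def totals by (simp add: power2_eq_square algebra_simps)
qed

lemma bill_HP_deviation:
  assumes "feasible_profile N E lP lO" "n < N" "x + y = E n"
  shows "bill_HP N E (lP(n := x)) (lO(n := y)) n - bill_HP N E lP lO n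
    = (x - lP n) * (2 * total N lP - total N E + 2 * lP n - E n) + 2 * (x - lP n)\<^sup>2"
proof -
  have totals: "total N (lP(n := x)) = total N lP + (x - lP n)"
    "total N (lO(n := y)) = total N E - total N lP - (x - lP n)"
    "total N lO = total N E - total N lP"
    using assms feasible_profileD(1)[OF assms(1,2)]
    by (simp_all add: total_fun_upd feasible_profile_total_offpeak)
  have loads: "y = E n - x" "lO n = E n - lP n"
    using assms feasible_profileD(1)[OF assms(1,2)] by simp_all
  show ?thesis
    unfolding bill_HP_def totals fun_upd_same unfolding loads
    by (simp add: power2_eq_square algebra_simps)
qed

lemma objective_deviation:
  "objective bill N E hP hO \<alpha> lP' lO' n - objective bill N E hP hO \<alpha> lP lO n
    = (1 - \<alpha>) * (bill N E lP' lO' n - bill N E lP lO n)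
      + \<alpha> * (utility hP hO lP lO n - utility hP hO lP' lO' n)"
  by (simp add: objective_def algebra_simps)

lemma nonneg_of_quadratic_nonneg:
  fixes a b :: real
  assumes a: "a \<ge> 0" and q: "\<And>t. 0 < t \<Longrightarrow> t \<le> 1 \<Longrightarrow> 0 \<le> b * t + a * t\<^sup>2"
  shows "b \<ge> 0"
proof (rule ccontr)
  assume "\<not> b \<ge> 0"
  define t where "t = min 1 (- b / (2 * (a + 1)))"
  have t: "0 < t" "t \<le> 1"
    using \<open>\<not> b \<ge> 0\<close> a by (auto simp: t_def divide_neg_pos)
  have "a * t \<le> (a + 1) * (- b / (2 * (a + 1)))"
    using a t by (intro mult_mono) (auto simp: t_def)
  also have "\<dots> = - b / 2"
    using a by (simp add: field_simps)
  finally have "t * (b + a * t) < 0"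
    using \<open>\<not> b \<ge> 0\<close> t by (intro mult_pos_neg) auto
  with q[OF t] show False
    by (simp add: power2_eq_square algebra_simps)
qed

lemma eq_zero_if_coupled_sign_condition:
  fixes \<delta> c :: "nat \<Rightarrow> real"
  assumes a: "a > 0" and c: "\<And>n. n < N \<Longrightarrow> c n \<ge> 0"
    and sign: "\<And>n. n < N \<Longrightarrow> (c n * (\<Sum>i<N. \<delta> i) + a * \<delta> n) * \<delta> n \<le> 0"
    and n: "n < N"
  shows "\<delta> n = 0"
proof -
  define S where "S = (\<Sum>i<N. \<delta> i)"
  have S_sign: "S * \<delta> i \<le> 0" if i: "i < N" for i
  proof (rule ccontr)
    assume pos: "\<not> S * \<delta> i \<le> 0"
    then have "\<delta> i \<noteq> 0"
      by auto
    then have "0 < a * (\<delta> i * \<delta> i)"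
      using a by (auto simp: zero_less_mult_iff linorder_neq_iff)
    moreover have "0 \<le> c i * (S * \<delta> i)"
      using c[OF i] pos by simp
    ultimately show False
      using sign[OF i] by (simp add: S_def algebra_simps)
  qed
  have "S * S = (\<Sum>i<N. S * \<delta> i)"
    unfolding S_def by (rule sum_distrib_left)
  also have "\<dots> \<le> 0"
    using S_sign by (intro sum_nonpos) simp
  finally have "S * S \<le> 0" .
  then have "S = 0"
    by (auto simp: mult_le_0_iff)
  then have "a * (\<delta> n * \<delta> n) \<le> 0"
    using sign[OF n] by (simp add: S_def algebra_simps)
  then show "\<delta> n = 0"
    using a by (auto simp: mult_le_0_iff)
qed

locale quadratic_deviation =
  fixes bill :: "nat \<Rightarrow> (nat \<Rightarrow> real) \<Rightarrow> (nat \<Rightarrow> real) \<Rightarrow> (nat \<Rightarrow> real) \<Rightarrow> nat \<Rightarrow> real"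
    and N :: nat and E hP hO :: "nat \<Rightarrow> real" and \<alpha> :: real
    and marginal :: "(nat \<Rightarrow> real) \<Rightarrow> nat \<Rightarrow> real" and curvature :: "nat \<Rightarrow> real"
  assumes deviation:
    "\<And>lP lO n x y. feasible_profile N E lP lO \<Longrightarrow> n < N \<Longrightarrow> x + y = E n \<Longrightarrow>
      objective bill N E hP hO \<alpha> (lP(n := x)) (lO(n := y)) n
        - objective bill N E hP hO \<alpha> lP lO n
        = (x - lP n) * marginal lP n + (x - lP n)\<^sup>2 * curvature n"
    and curvature_nonneg: "\<And>n. n < N \<Longrightarrow> curvature n \<ge> 0"
begin

lemma NE_if_marginal_zero:
  assumes "feasible_profile N E lP lO" and "\<And>n. n < N \<Longrightarrow> marginal lP n = 0"
  shows "is_NE bill N E hP hO \<alpha> lP lO"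
  unfolding is_NE_def
proof (intro conjI allI impI)
  fix n x y
  assume n: "n < N" and "feasible_user E n x y"
  then have "x + y = E n"
    by (simp add: feasible_user_def)
  moreover have "0 \<le> (x - lP n)\<^sup>2 * curvature n"
    using curvature_nonneg[OF n] by simp
  ultimately show "objective bill N E hP hO \<alpha> lP lO n
      \<le> objective bill N E hP hO \<alpha> (lP(n := x)) (lO(n := y)) n"
    using deviation[OF assms(1) n] assms(2)[OF n] by fastforce
qed (fact assms(1))

lemma NE_variational_inequality:
  assumes NE: "is_NE bill N E hP hO \<alpha> lP lO" and n: "n < N" and y: "0 \<le> y" "y \<le> E n"
  shows "0 \<le> marginal lP n * (y - lP n)"
proof -
  have feasible: "feasible_profile N E lP lO"
    using NE by (simp add: is_NE_def)
  have quadratic: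
    "0 \<le> ((y - lP n) * marginal lP n) * t + ((y - lP n)\<^sup>2 * curvature n) * t\<^sup>2"
    if t: "0 < t" "t \<le> 1" for t
  proof -
    define x where "x = lP n + t * (y - lP n)"
    have "x = (1 - t) * lP n + t * y"
      by (simp add: x_def algebra_simps)
    moreover have "0 \<le> (1 - t) * lP n + t * y"
      using t y feasible_profileD(2)[OF feasible n]
      by (intro add_nonneg_nonneg mult_nonneg_nonneg) auto
    moreover have "(1 - t) * lP n + t * y \<le> (1 - t) * E n + t * E n"
      using t y feasible_profileD(3)[OF feasible n] by (intro add_mono mult_left_mono) auto
    ultimately have "feasible_user E n x (E n - x)"
      by (simp add: feasible_user_def algebra_simps)
    then have "0 \<le> objective bill N E hP hO \<alpha> (lP(n := x)) (lO(n := E n - x)) n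
                    - objective bill N E hP hO \<alpha> lP lO n"
      using NE n by (simp add: is_NE_def)
    then show ?thesis
      by (simp add: deviation[OF feasible n] x_def power2_eq_square algebra_simps)
  qed
  have "0 \<le> (y - lP n)\<^sup>2 * curvature n"
    using curvature_nonneg[OF n] by simp
  then have "0 \<le> (y - lP n) * marginal lP n"
    using quadratic by (rule nonneg_of_quadratic_nonneg)
  then show ?thesis
    by (simp add: mult.commute)
qed

text \<open>Strong monotonicity of the marginal, coupled through the aggregate load, turns the variational
  inequalities at two equilibria into the sign condition of \<open>eq_zero_if_coupled_sign_condition\<close>.\<close>
lemma NE_unique:
  assumes NE_l: "is_NE bill N E hP hO \<alpha> lP lO" and NE_s: "is_NE bill N E hP hO \<alpha> sP sO"
    and \<kappa>: "\<kappa> > 0" and a: "a > 0" and c: "\<And>n. n < N \<Longrightarrow> c n \<ge> 0"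
    and monotone: "\<And>n. n < N \<Longrightarrow> marginal lP n - marginal sP n
                    = \<kappa> * (c n * (total N lP - total N sP) + a * (lP n - sP n))"
    and n: "n < N"
  shows "lP n = sP n \<and> lO n = sO n"
proof -
  have feasible: "feasible_profile N E lP lO" "feasible_profile N E sP sO"
    using NE_l NE_s by (simp_all add: is_NE_def)
  have sign: "(c i * (\<Sum>j<N. lP j - sP j) + a * (lP i - sP i)) * (lP i - sP i) \<le> 0"
    if i: "i < N" for i
  proof -
    have "0 \<le> marginal lP i * (sP i - lP i)" "0 \<le> marginal sP i * (lP i - sP i)"
      using NE_variational_inequality[OF NE_l i] NE_variational_inequality[OF NE_s i]
        feasible_profileD(2,3)[OF feasible(1) i] feasible_profileD(2,3)[OF feasible(2) i]
      by auto
    then have "(marginal lP i - marginal sP i) * (lP i - sP i) \<le> 0"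
      by (simp add: algebra_simps)
    then have "\<kappa> * ((c i * (total N lP - total N sP) + a * (lP i - sP i)) * (lP i - sP i)) \<le> 0"
      unfolding monotone[OF i] by (simp add: mult.assoc)
    then show ?thesis
      using \<kappa> by (simp add: total_diff mult_le_0_iff)
  qed
  have "lP n - sP n = 0"
    using eq_zero_if_coupled_sign_condition[OF a c sign n] .
  then show ?thesis
    using feasible_profileD(1)[OF feasible(1) n] feasible_profileD(1)[OF feasible(2) n] by simp
qed

end

lemma phi_denominator_pos:
  assumes "0 \<le> \<alpha>" "\<alpha> \<le> 1"
  shows "0 < (1 + \<alpha>) + (1 - \<alpha>) * real N"
  using assms by (simp add: add_pos_nonneg)

lemma phi_bounds:
  assumes "0 \<le> \<alpha>" "\<alpha> \<le> 1"
  shows "0 \<le> phi N \<alpha>" and "phi N \<alpha> \<le> 1"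
proof -
  have "0 \<le> (1 - \<alpha>) * real N"
    using assms by simp
  then have "2 * \<alpha> \<le> (1 + \<alpha>) + (1 - \<alpha>) * real N"
    using assms by linarith
  then show "0 \<le> phi N \<alpha>" "phi N \<alpha> \<le> 1"
    using phi_denominator_pos[OF assms, of N] assms by (simp_all add: phi_def)
qed

lemma HP_weight_bound:
  assumes "0 \<le> \<alpha>" "\<alpha> \<le> 1"
  shows "(1 - \<alpha>) / (2 * (1 + \<alpha>)) * phi N \<alpha> * (2 * real N - 1)
    \<le> 1 - (1 - \<alpha>) / (2 * (1 + \<alpha>))"
proof -
  define k where "k = (1 - \<alpha>) / (2 * (1 + \<alpha>))"
  define p where "p = phi N \<alpha>"
  define den where "den = (1 + \<alpha>) + (1 - \<alpha>) * real N"
  have den: "0 < den"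
    using phi_denominator_pos[OF assms] by (simp add: den_def)
  have k: "k * (2 * (1 + \<alpha>)) = 1 - \<alpha>"
    using assms by (simp add: k_def)
  have p: "p * den = 2 * \<alpha>"
    using den by (simp add: p_def phi_def den_def)
  have "k * p * (2 * real N - 1) * (2 * (1 + \<alpha>) * den)
      = (k * (2 * (1 + \<alpha>))) * (p * den) * (2 * real N - 1)"
    by (simp only: ac_simps)
  also have "\<dots> = (1 - \<alpha>) * (2 * \<alpha>) * (2 * real N - 1)"
    by (simp only: k p)
  also have "\<dots> \<le> (1 + 3 * \<alpha>) * den"
  proof -
    have "(1 + 3 * \<alpha>) * den - (1 - \<alpha>) * (2 * \<alpha>) * (2 * real N - 1)
        = (1 + 3 * \<alpha>) * (1 + \<alpha>) + 2 * \<alpha> * (1 - \<alpha>) + real N * (1 - \<alpha>)\<^sup>2"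
      by (simp add: den_def algebra_simps power2_eq_square)
    moreover have "0 \<le> (1 + 3 * \<alpha>) * (1 + \<alpha>) + 2 * \<alpha> * (1 - \<alpha>) + real N * (1 - \<alpha>)\<^sup>2"
      using assms by simp
    ultimately show ?thesis
      by linarith
  qed
  also have "\<dots> = (2 * (1 + \<alpha>) - k * (2 * (1 + \<alpha>))) * den"
    unfolding k by (simp add: algebra_simps)
  also have "\<dots> = (1 - k) * (2 * (1 + \<alpha>) * den)"
    by (simp add: algebra_simps)
  finally have "k * p * (2 * real N - 1) \<le> 1 - k"
    using den assms by simp
  then show ?thesis
    by (simp only: k_def p_def)
qed

locale two_period =
  fixes N :: nat and E hP hO :: "nat \<Rightarrow> real"
  assumes E_pos: "\<And>n. n < N \<Longrightarrow> E n > 0"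
    and hP_nonneg: "\<And>n. n < N \<Longrightarrow> hP n \<ge> 0"
    and hO_nonneg: "\<And>n. n < N \<Longrightarrow> hO n \<ge> 0"
    and h_sum: "\<And>n. n < N \<Longrightarrow> hP n + hO n = E n"
    and peak: "total N hP \<ge> total N E / 2" "total N E / 2 \<ge> total N hO"
begin

lemma total_E: "total N E = total N hP + total N hO"
  using h_sum by (rule total_eq_add)

lemma peak_excess_nonneg: "total N hO \<le> total N hP"
  using peak total_E by simp

lemma total_E_pos: "n < N \<Longrightarrow> total N E > 0"
  unfolding total_def using E_pos by (intro sum_pos) auto

lemma share_nonneg: "n < N \<Longrightarrow> 0 \<le> E n / total N E"
  using E_pos total_E_pos by (simp add: less_imp_le)

definition marginal_DP :: "real \<Rightarrow> (nat \<Rightarrow> real) \<Rightarrow> nat \<Rightarrow> real" where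
  "marginal_DP \<alpha> lP n =
     2 * (1 - \<alpha>) * (E n / total N E) * (2 * total N lP - total N E) + 4 * \<alpha> * (lP n - hP n)"

definition curvature_DP :: "real \<Rightarrow> nat \<Rightarrow> real" where
  "curvature_DP \<alpha> n = 2 * (1 - \<alpha>) * (E n / total N E) + 2 * \<alpha>"

lemma quadratic_deviation_DP:
  assumes "0 \<le> \<alpha>" "\<alpha> \<le> 1"
  shows "quadratic_deviation bill_DP N E hP hO \<alpha> (marginal_DP \<alpha>) (curvature_DP \<alpha>)"
proof
  fix lP lO n x y
  assume deviation: "feasible_profile N E lP lO" "n < N" "x + y = E n"
  define share where "share = E n / total N E"
  show "objective bill_DP N E hP hO \<alpha> (lP(n := x)) (lO(n := y)) n
      - objective bill_DP N E hP hO \<alpha> lP lO n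
      = (x - lP n) * marginal_DP \<alpha> lP n + (x - lP n)\<^sup>2 * curvature_DP \<alpha> n"
    unfolding objective_deviation bill_DP_deviation[OF deviation]
      utility_deviation[where hP = hP and hO = hO,
        OF deviation(1,2) h_sum[OF deviation(2)] deviation(3)]
      marginal_DP_def curvature_DP_def share_def[symmetric]
    by (simp add: algebra_simps)
next
  show "0 \<le> curvature_DP \<alpha> n" if "n < N" for n
    unfolding curvature_DP_def using assms share_nonneg[OF that]
    by (intro add_nonneg_nonneg mult_nonneg_nonneg) auto
qed

definition DP_peak :: "real \<Rightarrow> nat \<Rightarrow> real" where
  "DP_peak \<alpha> = (\<lambda>n. hP n + E n / total N E * ((1 - \<alpha>) / 2) * (total N hO - total N hP))"

definition DP_offpeak :: "real \<Rightarrow> nat \<Rightarrow> real" where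
  "DP_offpeak \<alpha> = (\<lambda>n. hO n + E n / total N E * ((1 - \<alpha>) / 2) * (total N hP - total N hO))"

lemma DP_profile_feasible:
  assumes shares: "\<forall>n<N. hP n / E n + 1/2 \<ge> total N hP / total N E"
    and "0 \<le> \<alpha>" "\<alpha> \<le> 1"
  shows "feasible_profile N E (DP_peak \<alpha>) (DP_offpeak \<alpha>)"
  unfolding feasible_profile_def feasible_user_def
proof (intro allI impI conjI)
  fix n assume n: "n < N"
  define share where "share = E n / total N E"
  define g where "g = share * (total N hP - total N hO)"
  have share: "0 \<le> share" "share * total N E = E n"
    using share_nonneg[OF n] total_E_pos[OF n] by (simp_all add: share_def)
  have g: "0 \<le> g"
    unfolding g_def using share peak_excess_nonneg by simp
  have "E n * (total N hP / total N E) \<le> E n * (hP n / E n + 1/2)"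
    using shares n E_pos[OF n] by (intro mult_left_mono) auto
  then have "share * total N hP \<le> hP n + E n / 2"
    using E_pos[OF n] by (simp add: share_def ring_distribs)
  moreover have "g = 2 * (share * total N hP) - share * total N E"
    unfolding g_def total_E by (simp add: algebra_simps)
  ultimately have "g \<le> 2 * hP n"
    using share by simp
  moreover have "(1 - \<alpha>) * g \<le> g"
    using assms g by (simp add: mult_left_le_one_le)
  moreover have "DP_peak \<alpha> n = hP n - (1 - \<alpha>) * g / 2"
    unfolding DP_peak_def g_def share_def[symmetric] by (simp add: field_simps)
  ultimately show "0 \<le> DP_peak \<alpha> n"
    by linarith
  show "0 \<le> DP_offpeak \<alpha> n"
    unfolding DP_offpeak_def using assms share_nonneg[OF n] peak_excess_nonneg hO_nonneg[OF n]
    by (intro add_nonneg_nonneg mult_nonneg_nonneg) auto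
  show "DP_peak \<alpha> n + DP_offpeak \<alpha> n = E n"
    unfolding DP_peak_def DP_offpeak_def share_def[symmetric] using h_sum[OF n]
    by (simp add: field_simps)
qed

lemma total_DP_peak:
  "total N (DP_peak \<alpha>) = total N hP + (1 - \<alpha>) / 2 * (total N hO - total N hP)"
proof (cases "N = 0")
  case True
  then show ?thesis
    by (simp add: total_def)
next
  case False
  define c where "c = (1 - \<alpha>) / 2 * (total N hO - total N hP) / total N E"
  have "DP_peak \<alpha> = (\<lambda>n. hP n + E n * c)"
    by (simp add: DP_peak_def c_def fun_eq_iff)
  then have "total N (DP_peak \<alpha>) = total N hP + total N E * c"
    by (simp add: total_def sum.distrib sum_distrib_right)
  moreover have "total N E * c = (1 - \<alpha>) / 2 * (total N hO - total N hP)"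
    using False total_E_pos[of 0] by (simp add: c_def)
  ultimately show ?thesis
    by simp
qed

lemma marginal_DP_at_DP_peak:
  assumes "n < N"
  shows "marginal_DP \<alpha> (DP_peak \<alpha>) n = 0"
proof -
  define share where "share = E n / total N E"
  show ?thesis
    unfolding marginal_DP_def total_DP_peak unfolding DP_peak_def share_def[symmetric]
    unfolding total_E by (simp add: field_simps)
qed

lemma marginal_DP_diff:
  "marginal_DP \<alpha> lP n - marginal_DP \<alpha> sP n
    = 4 * ((1 - \<alpha>) * (E n / total N E) * (total N lP - total N sP) + \<alpha> * (lP n - sP n))"
proof -
  define share where "share = E n / total N E"
  show ?thesis
    unfolding marginal_DP_def share_def[symmetric] by (simp add: algebra_simps)
qed

lemma DP_unique_NE:
  assumes shares: "\<forall>n<N. hP n / E n + 1/2 \<ge> total N hP / total N E"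
    and \<alpha>: "0 < \<alpha>" "\<alpha> \<le> 1"
  shows "is_NE bill_DP N E hP hO \<alpha> (DP_peak \<alpha>) (DP_offpeak \<alpha>)"
    and "is_NE bill_DP N E hP hO \<alpha> lP lO \<Longrightarrow> n < N \<Longrightarrow>
      lP n = DP_peak \<alpha> n \<and> lO n = DP_offpeak \<alpha> n"
proof -
  interpret DP: quadratic_deviation bill_DP N E hP hO \<alpha> "marginal_DP \<alpha>" "curvature_DP \<alpha>"
    using \<alpha> by (intro quadratic_deviation_DP) auto
  show NE: "is_NE bill_DP N E hP hO \<alpha> (DP_peak \<alpha>) (DP_offpeak \<alpha>)"
    using DP_profile_feasible[OF shares] \<alpha> marginal_DP_at_DP_peak
    by (intro DP.NE_if_marginal_zero) auto
  show "lP n = DP_peak \<alpha> n \<and> lO n = DP_offpeak \<alpha> n"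
    if "is_NE bill_DP N E hP hO \<alpha> lP lO" "n < N"
  proof (rule DP.NE_unique[OF that(1) NE _ \<alpha>(1) _ marginal_DP_diff that(2)])
    show "0 \<le> (1 - \<alpha>) * (E i / total N E)" if "i < N" for i
      using \<alpha> share_nonneg[OF that] by (intro mult_nonneg_nonneg) auto
  qed simp
qed

lemma DP_NE_at_zero:
  assumes "feasible_profile N E lP lO" and "total N lP = total N E / 2"
  shows "is_NE bill_DP N E hP hO 0 lP lO"
proof -
  interpret DP: quadratic_deviation bill_DP N E hP hO 0 "marginal_DP 0" "curvature_DP 0"
    by (intro quadratic_deviation_DP) auto
  show ?thesis
    using assms by (intro DP.NE_if_marginal_zero) (auto simp: marginal_DP_def)
qed

definition marginal_HP :: "real \<Rightarrow> (nat \<Rightarrow> real) \<Rightarrow> nat \<Rightarrow> real" where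
  "marginal_HP \<alpha> lP n =
     (1 - \<alpha>) * (2 * total N lP - total N E + 2 * lP n - E n) + 4 * \<alpha> * (lP n - hP n)"

lemma quadratic_deviation_HP:
  "quadratic_deviation bill_HP N E hP hO \<alpha> (marginal_HP \<alpha>) (\<lambda>_. 2)"
proof
  fix lP lO n x y
  assume deviation: "feasible_profile N E lP lO" "n < N" "x + y = E n"
  show "objective bill_HP N E hP hO \<alpha> (lP(n := x)) (lO(n := y)) n
      - objective bill_HP N E hP hO \<alpha> lP lO n
      = (x - lP n) * marginal_HP \<alpha> lP n + (x - lP n)\<^sup>2 * 2"
    unfolding objective_deviation bill_HP_deviation[OF deviation]
      utility_deviation[where hP = hP and hO = hO,
        OF deviation(1,2) h_sum[OF deviation(2)] deviation(3)]
      marginal_HP_def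
    by (simp add: algebra_simps)
qed simp

lemma marginal_HP_diff:
  "marginal_HP \<alpha> lP n - marginal_HP \<alpha> sP n
    = 2 * ((1 - \<alpha>) * (total N lP - total N sP) + (1 + \<alpha>) * (lP n - sP n))"
  by (simp add: marginal_HP_def algebra_simps)

definition HP_peak :: "real \<Rightarrow> nat \<Rightarrow> real" where
  "HP_peak \<alpha> = (\<lambda>n. hP n + (1 - \<alpha>) / (2 * (1 + \<alpha>)) *
                        (phi N \<alpha> * (total N hO - total N hP) + (hO n - hP n)))"

definition HP_offpeak :: "real \<Rightarrow> nat \<Rightarrow> real" where
  "HP_offpeak \<alpha> = (\<lambda>n. hO n + (1 - \<alpha>) / (2 * (1 + \<alpha>)) *
                        (phi N \<alpha> * (total N hP - total N hO) + (hP n - hO n)))"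

lemma HP_profile_feasible:
  assumes H: "\<forall>n<N. 2 * (real N - 1) * hP n \<ge> (total N hP - total N hO) - E n"
    and \<alpha>: "0 \<le> \<alpha>" "\<alpha> \<le> 1"
  shows "feasible_profile N E (HP_peak \<alpha>) (HP_offpeak \<alpha>)"
  unfolding feasible_profile_def feasible_user_def
proof (intro allI impI conjI)
  fix n assume n: "n < N"
  define k where "k = (1 - \<alpha>) / (2 * (1 + \<alpha>))"
  define p where "p = phi N \<alpha>"
  define g where "g = total N hP - total N hO"
  have k: "0 \<le> k" "k \<le> 1"
    using \<alpha> by (simp_all add: k_def field_simps)
  have p: "0 \<le> p" "p \<le> 1"
    using phi_bounds[OF \<alpha>] by (simp_all add: p_def)
  have g: "0 \<le> g"
    using peak_excess_nonneg by (simp add: g_def)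
  have "g \<le> (2 * real N - 1) * hP n + hO n"
    using H[rule_format, OF n] h_sum[OF n] by (simp add: g_def algebra_simps)
  then have "k * p * g \<le> k * p * ((2 * real N - 1) * hP n + hO n)"
    using k p by (intro mult_left_mono) auto
  also have "\<dots> = (k * p * (2 * real N - 1)) * hP n + p * (k * hO n)"
    by (simp add: algebra_simps)
  also have "\<dots> \<le> (1 - k) * hP n + 1 * (k * hO n)"
    using HP_weight_bound[OF \<alpha>, of N, folded k_def p_def] hP_nonneg[OF n]
      mult_nonneg_nonneg[OF k(1) hO_nonneg[OF n]] p(2)
    by (intro add_mono mult_right_mono) simp_all
  finally have "k * p * g \<le> (1 - k) * hP n + k * hO n"
    by simp
  moreover have "HP_peak \<alpha> n = (1 - k) * hP n + k * hO n - k * p * g"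
    unfolding HP_peak_def k_def[symmetric] p_def[symmetric] by (simp add: g_def algebra_simps)
  ultimately show "0 \<le> HP_peak \<alpha> n"
    by simp
  have "HP_offpeak \<alpha> n = (1 - k) * hO n + k * hP n + k * p * g"
    unfolding HP_offpeak_def k_def[symmetric] p_def[symmetric] by (simp add: g_def algebra_simps)
  then show "0 \<le> HP_offpeak \<alpha> n"
    using k p g hP_nonneg[OF n] hO_nonneg[OF n] by simp
  show "HP_peak \<alpha> n + HP_offpeak \<alpha> n = E n"
    unfolding HP_peak_def HP_offpeak_def k_def[symmetric] using h_sum[OF n]
    by (simp add: algebra_simps)
qed

lemma total_HP_peak:
  "total N (HP_peak \<alpha>)
    = total N hP + (1 - \<alpha>) / (2 * (1 + \<alpha>)) * (real N * phi N \<alpha> + 1) * (total N hO - total N hP)"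
proof -
  define k where "k = (1 - \<alpha>) / (2 * (1 + \<alpha>))"
  define p where "p = phi N \<alpha>"
  have "HP_peak \<alpha> = (\<lambda>n. hP n + k * p * (total N hO - total N hP) + k * (hO n - hP n))"
    unfolding HP_peak_def k_def[symmetric] p_def[symmetric] by (simp add: fun_eq_iff algebra_simps)
  then have "total N (HP_peak \<alpha>)
      = total N hP + real N * (k * p * (total N hO - total N hP)) + k * (total N hO - total N hP)"
    by (simp add: total_def sum.distrib sum_subtractf flip: sum_distrib_left)
  also have "\<dots> = total N hP + k * (real N * p + 1) * (total N hO - total N hP)"
    by (simp add: algebra_simps)
  finally show ?thesis
    by (simp only: k_def p_def)
qed

lemma marginal_HP_at_HP_peak:
  assumes n: "n < N" and \<alpha>: "0 \<le> \<alpha>" "\<alpha> \<le> 1"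
  shows "marginal_HP \<alpha> (HP_peak \<alpha>) n = 0"
proof -
  define k where "k = (1 - \<alpha>) / (2 * (1 + \<alpha>))"
  define p where "p = phi N \<alpha>"
  define den where "den = (1 + \<alpha>) + (1 - \<alpha>) * real N"
  have k: "k * (2 * (1 + \<alpha>)) = 1 - \<alpha>"
    using \<alpha> by (simp add: k_def)
  have p: "p * den = 2 * \<alpha>"
    using phi_denominator_pos[OF \<alpha>, of N] by (simp add: p_def phi_def den_def)
  have "marginal_HP \<alpha> (HP_peak \<alpha>) n
      = (hP n - hO n) * ((1 - \<alpha>) - k * (2 * (1 + \<alpha>)))
        + (total N hP - total N hO) * ((1 - \<alpha>) - k * (2 * (1 + \<alpha>)) - 2 * k * (p * den - 2 * \<alpha>))"
    unfolding marginal_HP_def total_HP_peak unfolding HP_peak_def k_def[symmetric] p_def[symmetric]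
    unfolding total_E h_sum[OF n, symmetric] by (simp add: den_def algebra_simps)
  then show ?thesis
    unfolding k p by simp
qed

lemma HP_unique_NE:
  assumes H: "\<forall>n<N. 2 * (real N - 1) * hP n \<ge> (total N hP - total N hO) - E n"
    and \<alpha>: "0 \<le> \<alpha>" "\<alpha> \<le> 1"
  shows "is_NE bill_HP N E hP hO \<alpha> (HP_peak \<alpha>) (HP_offpeak \<alpha>)"
    and "is_NE bill_HP N E hP hO \<alpha> lP lO \<Longrightarrow> n < N \<Longrightarrow>
      lP n = HP_peak \<alpha> n \<and> lO n = HP_offpeak \<alpha> n"
proof -
  interpret HP: quadratic_deviation bill_HP N E hP hO \<alpha> "marginal_HP \<alpha>" "\<lambda>_. 2"
    by (rule quadratic_deviation_HP)
  show NE: "is_NE bill_HP N E hP hO \<alpha> (HP_peak \<alpha>) (HP_offpeak \<alpha>)"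
    using HP_profile_feasible[OF H \<alpha>] marginal_HP_at_HP_peak[OF _ \<alpha>]
    by (rule HP.NE_if_marginal_zero)
  show "lP n = HP_peak \<alpha> n \<and> lO n = HP_offpeak \<alpha> n"
    if "is_NE bill_HP N E hP hO \<alpha> lP lO" "n < N"
    using that(1) NE _ _ _ marginal_HP_diff that(2)
    by (rule HP.NE_unique[where c = "\<lambda>_. 1 - \<alpha>"]) (use \<alpha> in auto)
qed

end

theorem theorem3:
  fixes N :: nat and E hP hO :: "nat \<Rightarrow> real"
  assumes E_pos: "\<And>n. n < N \<Longrightarrow> E n > 0"
    and hP_nonneg: "\<And>n. n < N \<Longrightarrow> hP n \<ge> 0"
    and hO_nonneg: "\<And>n. n < N \<Longrightarrow> hO n \<ge> 0"
    and h_sum: "\<And>n. n < N \<Longrightarrow> hP n + hO n = E n"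
    and peak: "total N hP \<ge> total N E / 2" "total N E / 2 \<ge> total N hO"
  shows
   "((\<forall>n<N. hP n / E n + 1/2 \<ge> total N hP / total N E) \<longrightarrow>
      (\<forall>\<alpha>. 0 < \<alpha> \<and> \<alpha> \<le> 1 \<longrightarrow>
         (let sP = (\<lambda>n. hP n + E n / total N E * ((1 - \<alpha>) / 2) * (total N hO - total N hP));
              sO = (\<lambda>n. hO n + E n / total N E * ((1 - \<alpha>) / 2) * (total N hP - total N hO))
          in is_NE bill_DP N E hP hO \<alpha> sP sO \<and>
             (\<forall>lP lO. is_NE bill_DP N E hP hO \<alpha> lP lO \<longrightarrow>
                (\<forall>n<N. lP n = sP n \<and> lO n = sO n)))) \<and>
      (\<forall>lP lO. feasible_profile N E lP lO \<and> total N lP = total N E / 2 \<longrightarrow>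
         is_NE bill_DP N E hP hO 0 lP lO))
    \<and>
    ((\<forall>n<N. 2 * (real N - 1) * hP n \<ge> (total N hP - total N hO) - E n) \<longrightarrow>
      (\<forall>\<alpha>. 0 \<le> \<alpha> \<and> \<alpha> \<le> 1 \<longrightarrow>
         0 \<le> phi N \<alpha> \<and> phi N \<alpha> \<le> 1 \<and>
         (let sP = (\<lambda>n. hP n + (1 - \<alpha>) / (2 * (1 + \<alpha>)) *
                        (phi N \<alpha> * (total N hO - total N hP) + (hO n - hP n)));
              sO = (\<lambda>n. hO n + (1 - \<alpha>) / (2 * (1 + \<alpha>)) *
                        (phi N \<alpha> * (total N hP - total N hO) + (hP n - hO n)))
          in is_NE bill_HP N E hP hO \<alpha> sP sO \<and>
             (\<forall>lP lO. is_NE bill_HP N E hP hO \<alpha> lP lO \<longrightarrow>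
                (\<forall>n<N. lP n = sP n \<and> lO n = sO n)))))"
proof -
  interpret two_period N E hP hO
    using assms by unfold_locales auto
  have DP: "is_NE bill_DP N E hP hO \<alpha> (DP_peak \<alpha>) (DP_offpeak \<alpha>) \<and>
      (\<forall>lP lO. is_NE bill_DP N E hP hO \<alpha> lP lO \<longrightarrow>
         (\<forall>n<N. lP n = DP_peak \<alpha> n \<and> lO n = DP_offpeak \<alpha> n))"
    if "\<forall>n<N. hP n / E n + 1/2 \<ge> total N hP / total N E" "0 < \<alpha> \<and> \<alpha> \<le> 1" for \<alpha>
    using DP_unique_NE[OF that(1)] that(2) by blast
  have HP: "is_NE bill_HP N E hP hO \<alpha> (HP_peak \<alpha>) (HP_offpeak \<alpha>) \<and>
      (\<forall>lP lO. is_NE bill_HP N E hP hO \<alpha> lP lO \<longrightarrow>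
         (\<forall>n<N. lP n = HP_peak \<alpha> n \<and> lO n = HP_offpeak \<alpha> n))"
    if "\<forall>n<N. 2 * (real N - 1) * hP n \<ge> (total N hP - total N hO) - E n" "0 \<le> \<alpha> \<and> \<alpha> \<le> 1"
    for \<alpha>
    using HP_unique_NE[OF that(1)] that(2) by blast
  show ?thesis
    unfolding Let_def DP_peak_def[symmetric] DP_offpeak_def[symmetric]
      HP_peak_def[symmetric] HP_offpeak_def[symmetric]
    using DP DP_NE_at_zero HP phi_bounds by auto
qed

end
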